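(* Let $G$ be a graph, $\mathcal{B}$ a set of balls of $G$, $X\subset V(G)$ and $\mathcal{H}$ the set of connected components of $G-X$. Let $u\in V(G)$, $B=B_r(u)\in\mathcal{B}$, and let $T$ be a positive non-clashing teaching map for $\mathcal{B}$. Suppose there exist $H_0\in\mathcal{H}$ and $v\in V(H_0)$ such that $|[v]_{\sim_{\mathcal{B}}}\cap T(B)|\ge 3$. Then there exists $z\in [v]_{\sim_{\mathcal{B}}}\cap T(B)$ such that the map obtained from $T$ by replacing $T(B)$ with $T(B)\setminus\{z\}$ is a positive non-clashing teaching map for $\mathcal{B}$.
   Context: For a graph $G$, $r\ge 0$ and $v\in V(G)$, the ball $B_r(v)$ is the set of vertices at distance at most $r$ from $v$. For a set $\mathcal{B}$ of balls, a positive teaching map $T$ assigns to each $B\in\mathcal{B}$ a set $T(B)\subseteq B$; $T$ is non-clashing for $\mathcal{B}$ if for every pair of distinct $B_1,B_2\in\mathcal{B}$ there is $w\in T(B_1)\cup T(B_2)$ with $w\notin B_1\cap B_2$. Two components $H,H'\in\mathcal{H}$ are twin-blocks, $H\sim_{\mathcal{B}}H'$, if there is an isomorphism $\alpha$ from $H$ to $H'$ such that (i) for each $u\in V(H)$ and $x\in X$, $ux\in E(G)$ iff $\alpha(u)x\in E(G)$, and (ii) for each $u\in V(H)$ and $r\in\mathbb{N}$, $B_r(u)\in\mathcal{B}$ iff $B_r(\alpha(u))\in\mathcal{B}$. For each pair $H\sim_{\mathcal{B}}H'$ one such isomorphism $\alpha_{H,H'}$ is fixed (the canonical isomorphism). For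 $v\in V(H)$, $[v]_{\sim_{\mathcal{B}}}=\{\alpha_{H,H'}(v) : H'\sim_{\mathcal{B}}H\}$. *)

theory Defs
  imports Main
begin

definition graph :: "'a set \<Rightarrow> ('a \<Rightarrow> 'a \<Rightarrow> bool) \<Rightarrow> bool" where
  "graph V E \<longleftrightarrow> (\<forall>x y. E x y \<longrightarrow> x \<in> V \<and> y \<in> V) \<and>
                   (\<forall>x y. E x y \<longrightarrow> E y x) \<and> (\<forall>x. \<not> E x x)"

definition walk_in :: "'a set \<Rightarrow> ('a \<Rightarrow> 'a \<Rightarrow> bool) \<Rightarrow> 'a list \<Rightarrow> bool" where
  "walk_in S E p \<longleftrightarrow> p \<noteq> [] \<and> set p \<subseteq> S \<and>
                      (\<forall>i < length p - 1. E (p ! i) (p ! Suc i))"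

definition ball :: "'a set \<Rightarrow> ('a \<Rightarrow> 'a \<Rightarrow> bool) \<Rightarrow> nat \<Rightarrow> 'a \<Rightarrow> 'a set" where
  "ball V E r v = {w. \<exists>p. walk_in V E p \<and> hd p = v \<and> last p = w \<and> length p \<le> r + 1}"

definition balls :: "'a set \<Rightarrow> ('a \<Rightarrow> 'a \<Rightarrow> bool) \<Rightarrow> 'a set set" where
  "balls V E = {ball V E r v | r v. v \<in> V}"

definition connected_in :: "'a set \<Rightarrow> ('a \<Rightarrow> 'a \<Rightarrow> bool) \<Rightarrow> 'a \<Rightarrow> 'a \<Rightarrow> bool" where
  "connected_in S E x y \<longleftrightarrow> (\<exists>p. walk_in S E p \<and> hd p = x \<and> last p = y)"

definition components :: "'a set \<Rightarrow> ('a \<Rightarrow> 'a \<Rightarrow> bool) \<Rightarrow> 'a set \<Rightarrow> 'a set set" where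
  "components V E X = {{y. connected_in (V - X) E x y} | x. x \<in> V - X}"

text \<open>alpha is an isomorphism from component H to H' witnessing H ~_B H'.\<close>
definition twin_iso :: "'a set \<Rightarrow> ('a \<Rightarrow> 'a \<Rightarrow> bool) \<Rightarrow> 'a set \<Rightarrow> 'a set set
    \<Rightarrow> 'a set \<Rightarrow> 'a set \<Rightarrow> ('a \<Rightarrow> 'a) \<Rightarrow> bool" where
  "twin_iso V E X \<B> H H' \<alpha> \<longleftrightarrow>
     bij_betw \<alpha> H H' \<and>
     (\<forall>a\<in>H. \<forall>b\<in>H. E a b \<longleftrightarrow> E (\<alpha> a) (\<alpha> b)) \<and>
     (\<forall>a\<in>H. \<forall>x\<in>X. E a x \<longleftrightarrow> E (\<alpha> a) x) \<and>
     (\<forall>a\<in>H. \<forall>r. ball V E r a \<in> \<B> \<longleftrightarrow> ball V E r (\<alpha> a) \<in> \<B>)"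

definition twin_blocks :: "'a set \<Rightarrow> ('a \<Rightarrow> 'a \<Rightarrow> bool) \<Rightarrow> 'a set \<Rightarrow> 'a set set
    \<Rightarrow> 'a set \<Rightarrow> 'a set \<Rightarrow> bool" where
  "twin_blocks V E X \<B> H H' \<longleftrightarrow>
     H \<in> components V E X \<and> H' \<in> components V E X \<and> (\<exists>\<alpha>. twin_iso V E X \<B> H H' \<alpha>)"

definition canonical_isos :: "'a set \<Rightarrow> ('a \<Rightarrow> 'a \<Rightarrow> bool) \<Rightarrow> 'a set \<Rightarrow> 'a set set
    \<Rightarrow> ('a set \<Rightarrow> 'a set \<Rightarrow> 'a \<Rightarrow> 'a) \<Rightarrow> bool" where
  "canonical_isos V E X \<B> canon \<longleftrightarrow>
     (\<forall>H H'. twin_blocks V E X \<B> H H' \<longrightarrow> twin_iso V E X \<B> H H' (canon H H'))"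

definition twin_class :: "'a set \<Rightarrow> ('a \<Rightarrow> 'a \<Rightarrow> bool) \<Rightarrow> 'a set \<Rightarrow> 'a set set
    \<Rightarrow> ('a set \<Rightarrow> 'a set \<Rightarrow> 'a \<Rightarrow> 'a) \<Rightarrow> 'a set \<Rightarrow> 'a \<Rightarrow> 'a set" where
  "twin_class V E X \<B> canon H v = {canon H H' v | H'. twin_blocks V E X \<B> H H'}"

definition positive_teaching :: "'a set set \<Rightarrow> ('a set \<Rightarrow> 'a set) \<Rightarrow> bool" where
  "positive_teaching \<B> T \<longleftrightarrow> (\<forall>B\<in>\<B>. T B \<subseteq> B)"

definition non_clashing :: "'a set set \<Rightarrow> ('a set \<Rightarrow> 'a set) \<Rightarrow> bool" where
  "non_clashing \<B> T \<longleftrightarrow>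
     (\<forall>B1\<in>\<B>. \<forall>B2\<in>\<B>. B1 \<noteq> B2 \<longrightarrow> (\<exists>w \<in> T B1 \<union> T B2. w \<notin> B1 \<inter> B2))"

end

theory Submission
  imports Defs
begin

text \<open>Let z, z', z'' be three twins of v in T(B). A ball containing z' and z'' has
  its centre outside the component of z' or outside that of z''. Exchanging that
  component with the component of z along the canonical isomorphisms, and fixing all
  other vertices, is a graph homomorphism, so it does not increase distances from the
  centre; hence the ball also contains z. Consequently every clash with B that z
  resolves is also resolved by z' or z'', which stay in T(B), so z can be dropped.\<close>

lemma walk_in_Nil [simp]: "\<not> walk_in S E []"
  by (simp add: walk_in_def)

lemma walk_in_single [simp]: "walk_in S E [x] \<longleftrightarrow> x \<in> S"
  by (simp add: walk_in_def)

lemma walk_in_Cons_Cons [simp]: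
  "walk_in S E (x # y # p) \<longleftrightarrow> x \<in> S \<and> E x y \<and> walk_in S E (y # p)"
  by (auto simp: walk_in_def less_Suc_eq_0_disj)

lemma walk_in_set: "walk_in S E p \<Longrightarrow> set p \<subseteq> S"
  by (simp add: walk_in_def)

lemma walk_in_snoc:
  "walk_in S E p \<Longrightarrow> E (last p) x \<Longrightarrow> x \<in> S \<Longrightarrow> walk_in S E (p @ [x])"
  by (induction p rule: induct_list012) auto

lemma walk_in_join:
  "walk_in S E p \<Longrightarrow> walk_in S E q \<Longrightarrow> last p = hd q \<Longrightarrow> walk_in S E (p @ tl q)"
  by (induction p rule: induct_list012) (cases q; auto)+

lemma walk_in_rev:
  assumes "walk_in S E p" and "\<And>a b. E a b \<Longrightarrow> E b a"
  shows "walk_in S E (rev p)"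
  using assms(1)
proof (induction p rule: induct_list012)
  case (3 x y p)
  then show ?case
    using walk_in_snoc[of S E "rev (y # p)" x] by (simp add: assms(2))
qed simp_all

lemma walk_in_map:
  assumes "walk_in S E p" and "f ` S \<subseteq> S'"
    and "\<And>a b. a \<in> S \<Longrightarrow> b \<in> S \<Longrightarrow> E a b \<Longrightarrow> E (f a) (f b)"
  shows "walk_in S' E (map f p)"
  using assms(1)
  by (induction p rule: induct_list012) (use assms(2,3) walk_in_set in force)+

lemma graph_sym: "graph V E \<Longrightarrow> E a b \<Longrightarrow> E b a"
  unfolding graph_def by blast

lemma connected_in_sym:
  assumes "graph V E" and "connected_in S E x y"
  shows "connected_in S E y x"
proof -
  obtain p where p: "walk_in S E p" "hd p = x" "last p = y"
    using assms(2) unfolding connected_in_def by blast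
  then have "p \<noteq> []" by auto
  with p have "walk_in S E (rev p) \<and> hd (rev p) = y \<and> last (rev p) = x"
    by (simp add: walk_in_rev graph_sym[OF assms(1)] hd_rev last_rev)
  then show ?thesis unfolding connected_in_def by blast
qed

lemma connected_in_trans:
  assumes "connected_in S E x y" and "connected_in S E y z"
  shows "connected_in S E x z"
proof -
  obtain p where p: "walk_in S E p" "hd p = x" "last p = y"
    using assms(1) unfolding connected_in_def by blast
  obtain q where q: "walk_in S E q" "hd q = y" "last q = z"
    using assms(2) unfolding connected_in_def by blast
  have "p \<noteq> []" "q \<noteq> []" using p(1) q(1) by auto
  moreover have "last (p @ tl q) = z"
    using calculation p(3) q(2,3) by (cases q) (auto simp: last_append)
  ultimately show ?thesis
    using p q walk_in_join[OF p(1) q(1)] unfolding connected_in_def by fastforce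
qed

lemma component_subset:
  assumes "H \<in> components V E X"
  shows "H \<subseteq> V - X"
proof
  fix y assume "y \<in> H"
  obtain x where "H = {y. connected_in (V - X) E x y}"
    using assms unfolding components_def by blast
  with \<open>y \<in> H\<close> obtain p where "walk_in (V - X) E p" "last p = y"
    unfolding connected_in_def by blast
  then show "y \<in> V - X"
    by (metis walk_in_Nil walk_in_set last_in_set subsetD)
qed

lemma component_closed:
  assumes "graph V E" and "H \<in> components V E X" and "a \<in> H" and "E a b" and "b \<notin> X"
  shows "b \<in> H"
proof -
  obtain x where H: "H = {y. connected_in (V - X) E x y}"
    using assms(2) unfolding components_def by blast
  then obtain p where p: "walk_in (V - X) E p" "hd p = x" "last p = a"
    using assms(3) unfolding connected_in_def by blast
  have "p \<noteq> []" using p(1) by auto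
  have "b \<in> V" using assms(1,4) unfolding graph_def by blast
  then have "walk_in (V - X) E (p @ [b])"
    using walk_in_snoc[OF p(1)] p(3) assms(4,5) by simp
  with p(2) \<open>p \<noteq> []\<close> have "connected_in (V - X) E x b"
    unfolding connected_in_def by (intro exI[of _ "p @ [b]"]) simp
  then show ?thesis using H by simp
qed

lemma components_eq_if_common_vertex:
  assumes "graph V E" and "H \<in> components V E X" and "H' \<in> components V E X"
    and "c \<in> H" and "c \<in> H'"
  shows "H = H'"
proof -
  obtain x x' where H: "H = {y. connected_in (V - X) E x y}"
    and H': "H' = {y. connected_in (V - X) E x' y}"
    using assms(2,3) unfolding components_def by blast
  have "connected_in (V - X) E x c" "connected_in (V - X) E x' c"
    using assms(4,5) H H' by auto
  then have "connected_in (V - X) E x x'" "connected_in (V - X) E x' x"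
    by (meson assms(1) connected_in_sym connected_in_trans)+
  then show ?thesis
    unfolding H H' by (metis (no_types, lifting) Collect_cong connected_in_trans)
qed

lemma homomorphism_image_in_ball:
  assumes "f ` V \<subseteq> V" and "\<And>a b. a \<in> V \<Longrightarrow> b \<in> V \<Longrightarrow> E a b \<Longrightarrow> E (f a) (f b)"
    and "w \<in> ball V E r c"
  shows "f w \<in> ball V E r (f c)"
proof -
  obtain p where p: "walk_in V E p" "hd p = c" "last p = w" "length p \<le> r + 1"
    using assms(3) unfolding ball_def by blast
  then have "p \<noteq> []" by auto
  with p have "walk_in V E (map f p) \<and> hd (map f p) = f c \<and> last (map f p) = f w
      \<and> length (map f p) \<le> r + 1"
    by (simp add: walk_in_map[OF p(1) assms(1,2)] hd_map last_map)
  then show ?thesis unfolding ball_def by blast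
qed

lemma twin_iso_inv:
  assumes "twin_iso V E X \<B> H H' \<alpha>"
  shows "twin_iso V E X \<B> H' H (inv_into H \<alpha>)"
proof -
  have bij: "bij_betw \<alpha> H H'" using assms unfolding twin_iso_def by blast
  have inv: "inv_into H \<alpha> a \<in> H \<and> \<alpha> (inv_into H \<alpha> a) = a" if "a \<in> H'" for a
    using that bij by (metis bij_betw_apply bij_betw_inv_into bij_betw_inv_into_right)
  have iso: "\<forall>a\<in>H. \<forall>b\<in>H. E a b \<longleftrightarrow> E (\<alpha> a) (\<alpha> b)"
    "\<forall>a\<in>H. \<forall>x\<in>X. E a x \<longleftrightarrow> E (\<alpha> a) x"
    "\<forall>a\<in>H. \<forall>r. ball V E r a \<in> \<B> \<longleftrightarrow> ball V E r (\<alpha> a) \<in> \<B>"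
    using assms unfolding twin_iso_def by blast+
  show ?thesis
    unfolding twin_iso_def
  proof (intro conjI ballI allI)
    show "bij_betw (inv_into H \<alpha>) H' H" using bij_betw_inv_into[OF bij] .
  next
    fix a b assume "a \<in> H'" "b \<in> H'"
    then show "E a b \<longleftrightarrow> E (inv_into H \<alpha> a) (inv_into H \<alpha> b)"
      using iso(1) inv by metis
  next
    fix a x assume "a \<in> H'" "x \<in> X"
    then show "E a x \<longleftrightarrow> E (inv_into H \<alpha> a) x"
      using iso(2) inv by metis
  next
    fix a r assume "a \<in> H'"
    then show "ball V E r a \<in> \<B> \<longleftrightarrow> ball V E r (inv_into H \<alpha> a) \<in> \<B>"
      using iso(3) inv by metis
  qed
qed


lemma twin_iso_comp:
  assumes "twin_iso V E X \<B> H H' \<alpha>" and "twin_iso V E X \<B> H' H'' \<beta>"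
  shows "twin_iso V E X \<B> H H'' (\<beta> \<circ> \<alpha>)"
proof -
  have bij: "bij_betw \<alpha> H H'" "bij_betw \<beta> H' H''"
    using assms unfolding twin_iso_def by blast+
  have into: "\<alpha> a \<in> H'" if "a \<in> H" for a
    using bij(1) that by (rule bij_betw_apply)
  show ?thesis
    using assms bij_betw_trans[OF bij] unfolding twin_iso_def comp_apply
    by (simp add: into)
qed

lemma twin_iso_swap_preserves_edges:
  assumes "graph V E" and "H \<in> components V E X" and "twin_iso V E X \<B> H H' \<beta>"
    and "E a b"
  shows "E (if a \<in> H then \<beta> a else a) (if b \<in> H then \<beta> b else b)"
proof -
  have iso: "\<forall>a\<in>H. \<forall>b\<in>H. E a b \<longleftrightarrow> E (\<beta> a) (\<beta> b)" "\<forall>a\<in>H. \<forall>x\<in>X. E a x \<longleftrightarrow> E (\<beta> a) x"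
    using assms(3) unfolding twin_iso_def by blast+
  have leave: "y \<in> X" if "x \<in> H" "y \<notin> H" "E x y" for x y
    using component_closed[OF assms(1,2)] that by blast
  consider "a \<in> H" "b \<in> H" | "a \<in> H" "b \<notin> H" | "a \<notin> H" "b \<in> H" | "a \<notin> H" "b \<notin> H"
    by blast
  then show ?thesis
  proof cases
    case 2
    then have "b \<in> X" using leave assms(4) by blast
    with 2 show ?thesis using iso(2) assms(4) by simp
  next
    case 3
    then have "E (\<beta> b) a"
      using iso(2) leave graph_sym[OF assms(1) assms(4)] by blast
    with 3 show ?thesis using graph_sym[OF assms(1)] by simp
  qed (use assms(4) iso leave in auto)
qed

lemma twin_iso_ball_transfer:
  assumes "graph V E" and "H \<in> components V E X" and "H' \<in> components V E X"
    and "twin_iso V E X \<B> H H' \<beta>" and "c \<notin> H" and "w \<in> H" and "w \<in> ball V E r c"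
  shows "\<beta> w \<in> ball V E r c"
proof -
  define swap where "swap = (\<lambda>x. if x \<in> H then \<beta> x else x)"
  have "\<beta> ` H \<subseteq> V"
    using assms(4) component_subset[OF assms(3)] unfolding twin_iso_def bij_betw_def by blast
  then have "swap ` V \<subseteq> V" unfolding swap_def by auto
  moreover have "E (swap a) (swap b)" if "E a b" for a b
    unfolding swap_def using twin_iso_swap_preserves_edges[OF assms(1,2,4) that] .
  ultimately have "swap w \<in> ball V E r (swap c)"
    using homomorphism_image_in_ball assms(7) by metis
  then show ?thesis using assms(5,6) unfolding swap_def by simp
qed

lemma canonical_iso_ball_transfer:
  assumes "graph V E" and "canonical_isos V E X \<B> canon"
    and "twin_blocks V E X \<B> H0 H" and "twin_blocks V E X \<B> H0 H'" and "v \<in> H0"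
    and "c \<notin> H'" and "canon H0 H' v \<in> ball V E r c"
  shows "canon H0 H v \<in> ball V E r c"
proof -
  let ?\<alpha> = "canon H0 H" and ?\<alpha>' = "canon H0 H'"
  have iso: "twin_iso V E X \<B> H0 H ?\<alpha>" "twin_iso V E X \<B> H0 H' ?\<alpha>'"
    using assms(2-4) unfolding canonical_isos_def by blast+
  then have bij': "bij_betw ?\<alpha>' H0 H'" unfolding twin_iso_def by blast
  have "twin_iso V E X \<B> H' H (?\<alpha> \<circ> inv_into H0 ?\<alpha>')"
    using twin_iso_comp[OF twin_iso_inv[OF iso(2)] iso(1)] .
  moreover have "?\<alpha>' v \<in> H'" using bij' assms(5) by (rule bij_betw_apply)
  moreover have "(?\<alpha> \<circ> inv_into H0 ?\<alpha>') (?\<alpha>' v) = ?\<alpha> v"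
    using bij' assms(5) by (simp add: bij_betw_def)
  ultimately show ?thesis
    using twin_iso_ball_transfer[OF assms(1) _ _ _ assms(6) _ assms(7)] assms(3,4)
    unfolding twin_blocks_def by metis
qed

lemma ball_through_two_twins:
  assumes "graph V E" and "canonical_isos V E X \<B> canon" and "v \<in> H0"
    and "z \<in> twin_class V E X \<B> canon H0 v"
    and "z' \<in> twin_class V E X \<B> canon H0 v" and "z'' \<in> twin_class V E X \<B> canon H0 v"
    and "z' \<noteq> z''" and "B \<in> balls V E" and "z' \<in> B" and "z'' \<in> B"
  shows "z \<in> B"
proof -
  obtain H H' H'' where H: "z = canon H0 H v" "twin_blocks V E X \<B> H0 H"
    and H': "z' = canon H0 H' v" "twin_blocks V E X \<B> H0 H'"
    and H'': "z'' = canon H0 H'' v" "twin_blocks V E X \<B> H0 H''"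
    using assms(4-6) unfolding twin_class_def by blast
  obtain r c where B: "B = ball V E r c"
    using assms(8) unfolding balls_def by blast
  have "H' \<noteq> H''" using H' H'' assms(7) by blast
  then have "c \<notin> H' \<or> c \<notin> H''"
    using components_eq_if_common_vertex[OF assms(1)] H'(2) H''(2) unfolding twin_blocks_def by blast
  then show ?thesis
    using canonical_iso_ball_transfer[OF assms(1,2) H(2) _ assms(3)] H' H'' H(1) B assms(9,10)
    by metis
qed

lemma positive_teaching_remove:
  "positive_teaching \<B> T \<Longrightarrow> positive_teaching \<B> (T(B := T B - Z))"
  unfolding positive_teaching_def by auto

lemma non_clashing_remove_redundant:
  assumes "non_clashing \<B> T" and "positive_teaching \<B> T" and "B \<in> \<B>" and "z \<in> T B"
    and "Y \<subseteq> T B - {z}" and "\<And>B'. B' \<in> \<B> \<Longrightarrow> Y \<subseteq> B' \<Longrightarrow> z \<in> B'"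
  shows "non_clashing \<B> (T(B := T B - {z}))"
proof -
  let ?T = "T(B := T B - {z})"
  have "z \<in> B" using assms(2-4) unfolding positive_teaching_def by blast
  have clash_B: "\<exists>w \<in> ?T B \<union> ?T B'. w \<notin> B \<inter> B'" if B': "B' \<in> \<B>" "B' \<noteq> B" for B'
  proof -
    obtain w where w: "w \<in> T B \<union> T B'" "w \<notin> B \<inter> B'"
      using assms(1,3) B' unfolding non_clashing_def by metis
    show ?thesis
    proof (cases "w = z")
      case True
      with w(2) \<open>z \<in> B\<close> have "\<not> Y \<subseteq> B'" using assms(6) B'(1) by blast
      then show ?thesis using assms(5) by auto
    qed (use w B' in auto)
  qed
  show ?thesis
    unfolding non_clashing_def
  proof (intro ballI impI)
    fix B1 B2 assume B12: "B1 \<in> \<B>" "B2 \<in> \<B>" "B1 \<noteq> B2"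
    consider "B1 = B" | "B2 = B" | "B1 \<noteq> B" "B2 \<noteq> B" by blast
    then show "\<exists>w \<in> ?T B1 \<union> ?T B2. w \<notin> B1 \<inter> B2"
    proof cases
      case 1
      then show ?thesis using clash_B B12 by blast
    next
      case 2
      then show ?thesis using clash_B[of B1] B12 by (simp add: Un_commute Int_commute)
    next
      case 3
      then show ?thesis using assms(1) B12 unfolding non_clashing_def by simp
    qed
  qed
qed

theorem lemma9:
  fixes V :: "'a set" and E :: "'a \<Rightarrow> 'a \<Rightarrow> bool" and X :: "'a set"
    and \<B> :: "'a set set" and T :: "'a set \<Rightarrow> 'a set"
    and canon :: "'a set \<Rightarrow> 'a set \<Rightarrow> 'a \<Rightarrow> 'a"
    and u v :: 'a and r :: nat and B H0 :: "'a set"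
  assumes "graph V E" and "finite V"
    and "X \<subseteq> V"
    and "\<B> \<subseteq> balls V E"
    and "canonical_isos V E X \<B> canon"
    and "u \<in> V" and "B = ball V E r u" and "B \<in> \<B>"
    and "positive_teaching \<B> T" and "non_clashing \<B> T"
    and "H0 \<in> components V E X" and "v \<in> H0"
    and "card (twin_class V E X \<B> canon H0 v \<inter> T B) \<ge> 3"
  shows "\<exists>z \<in> twin_class V E X \<B> canon H0 v \<inter> T B.
           positive_teaching \<B> (T(B := T B - {z})) \<and>
           non_clashing \<B> (T(B := T B - {z}))"
proof -
  let ?C = "twin_class V E X \<B> canon H0 v \<inter> T B"
  obtain S where "S \<subseteq> ?C" "card S = 3"
    using obtain_subset_with_card_n assms(13) by metis
  then obtain z z' z'' where z: "z \<in> ?C" "z' \<in> ?C" "z'' \<in> ?C" "z \<noteq> z'" "z' \<noteq> z''" "z \<noteq> z''"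
    unfolding card_3_iff by blast
  have "z \<in> B'" if "B' \<in> \<B>" "{z', z''} \<subseteq> B'" for B'
    using ball_through_two_twins[OF assms(1,5,12)] z assms(4) that by blast
  then have "non_clashing \<B> (T(B := T B - {z}))"
    using non_clashing_remove_redundant[OF assms(10,9,8), of z "{z', z''}"] z by blast
  then show ?thesis
    using positive_teaching_remove[OF assms(9)] z(1) by blast
qed

end
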